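(* If the Follow algorithm (described in the context) discovers an edge (observes a successful infection along it) belonging to some $\delta$-edge connected component of $\mathcal G$, then it discovers every edge of that $\delta$-edge connected component.
   Context: A temporal graph $\mathcal G=(V,E,\lambda)$ with lifetime $T_{\max}$ consists of a finite undirected static graph $(V,E)$ and a labeling $\lambda:E\to\{1,\dots,T_{\max}\}$; edge $e$ is present only at time $\lambda(e)$. Infection model with parameter $\delta\in\mathbb N^+$: a seed $(u,t)$ makes $u$ infected at time $t$; otherwise a susceptible node $u$ becomes infected at time $t$ iff some neighbour $v$ infectious at time $t$ has $\lambda(uv)=t$ (exactly one infector recorded if several exist). A node infected at time $t$ is infectious at times $t+1,\dots,t+\delta$ and resistant afterwards. Each round, the Discoverer submits seed infections and observes an infection log (triples $(u,v,t)$: $u$ infected $v$ at time $t$). $\delta$-edge connected components: relate two edges if they share an endpoint and their labels differ by at most $\delta$; the equivalence classes of the transitive closure are the $\delta$-edge connected components. Subroutine Explore$(u,t)$: for each $t'\in\{t-\delta-1,t-1,t\}$, if no round with seed $(u,t')$ was performed, perform a round with the single seed $(u,t')$ and record it; then for each newly observed successful infection along an edge $uv$ at time $t''$, call Explore$(v,t'')$. Algorithm Follow: pick any node $v_0$; for each $i\in[0,\lceil T_{\max}/\delta\rceil]$ perform a round with single seed $(v_0,i\delta)$; for each edge $e=v_0u$ along which an infection succeeds, call Explore$(u,\lambda(e))$. *)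

theory Defs
  imports Complex_Main
begin

text \<open>Times of seeds/infections are integers (Explore may seed at times t - delta - 1 \<le> 0).
The infectious period is d (= delta).\<close>

type_synonym 'v log = "('v \<times> 'v \<times> int) set"
type_synonym 'v memo = "('v \<times> int) \<Rightarrow> 'v log option"

definition temporal_graph :: "'v set \<Rightarrow> 'v set set \<Rightarrow> ('v set \<Rightarrow> nat) \<Rightarrow> nat \<Rightarrow> bool" where
  "temporal_graph V E lab Tmax \<longleftrightarrow>
     finite V \<and> E \<subseteq> {{a, b} | a b. a \<in> V \<and> b \<in> V \<and> a \<noteq> b} \<and>
     (\<forall>e\<in>E. 1 \<le> lab e \<and> lab e \<le> Tmax)"

definition can_infect ::
  "'v set set \<Rightarrow> ('v set \<Rightarrow> nat) \<Rightarrow> nat \<Rightarrow> ('v \<Rightarrow> int option) \<Rightarrow> 'v \<Rightarrow> 'v \<Rightarrow> int \<Rightarrow> bool" where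
  "can_infect E lab d I v u t \<longleftrightarrow>
     (\<exists>tv. I v = Some tv \<and> tv < t \<and> t \<le> tv + int d) \<and> {u, v} \<in> E \<and> int (lab {u, v}) = t"

definition infection_times ::
  "'v set set \<Rightarrow> ('v set \<Rightarrow> nat) \<Rightarrow> nat \<Rightarrow> 'v \<Rightarrow> int \<Rightarrow> ('v \<Rightarrow> int option) \<Rightarrow> bool" where
  "infection_times E lab d s t0 I \<longleftrightarrow>
     I s = Some t0 \<and>
     (\<forall>u t. u \<noteq> s \<longrightarrow>
        (I u = Some t \<longleftrightarrow>
           (\<exists>v. can_infect E lab d I v u t) \<and> (\<forall>t'<t. \<not> (\<exists>v. can_infect E lab d I v u t'))))"

text \<open>L is a possible infection log of the round with single seed (s, t0): for each
infected non-seed node exactly one (arbitrary) valid infector is recorded.\<close>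
definition round_log ::
  "'v set set \<Rightarrow> ('v set \<Rightarrow> nat) \<Rightarrow> nat \<Rightarrow> 'v \<Rightarrow> int \<Rightarrow> 'v log \<Rightarrow> bool" where
  "round_log E lab d s t0 L \<longleftrightarrow>
     (\<exists>I par. infection_times E lab d s t0 I \<and>
        (\<forall>u t. u \<noteq> s \<longrightarrow> I u = Some t \<longrightarrow> can_infect E lab d I (par u) u t) \<and>
        L = {(par u, u, t) | u t. u \<noteq> s \<and> I u = Some t})"

text \<open>A memo M records, for each seed (u,t) of a performed round, the observed log.
rounds_rel: for each t' in the list (in order), perform the round with seed (u,t')
unless one was already performed.\<close>
inductive rounds_rel ::
  "'v set set \<Rightarrow> ('v set \<Rightarrow> nat) \<Rightarrow> nat \<Rightarrow> 'v memo \<Rightarrow> 'v \<Rightarrow> int list \<Rightarrow> 'v memo \<Rightarrow> bool"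
  for E lab d where
  rounds_nil: "rounds_rel E lab d M u [] M"
| rounds_done: "(u, t') \<in> dom M \<Longrightarrow> rounds_rel E lab d M u ts M'
     \<Longrightarrow> rounds_rel E lab d M u (t' # ts) M'"
| rounds_new: "(u, t') \<notin> dom M \<Longrightarrow> round_log E lab d u t' L
     \<Longrightarrow> rounds_rel E lab d (M((u, t') \<mapsto> L)) u ts M'
     \<Longrightarrow> rounds_rel E lab d M u (t' # ts) M'"

text \<open>The newly observed infections along edges uv are those (u,v,t'') in the logs of
the rounds performed during this call; they are processed in an arbitrary order.\<close>
inductive explore_rel and explore_all_rel where
  explore: "rounds_rel E lab d M u [t - int d - 1, t - 1, t] M'
     \<Longrightarrow> distinct xs
     \<Longrightarrow> set xs = {(v, t''). \<exists>t'\<in>{t - int d - 1, t - 1, t}. M (u, t') = None \<and>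
                      (\<exists>L. M' (u, t') = Some L \<and> (u, v, t'') \<in> L)}
     \<Longrightarrow> explore_all_rel E lab d M' xs M''
     \<Longrightarrow> explore_rel E lab d M u t M''"
| explore_all_nil: "explore_all_rel E lab d M [] M"
| explore_all_cons: "explore_rel E lab d M v t M'
     \<Longrightarrow> explore_all_rel E lab d M' xs M''
     \<Longrightarrow> explore_all_rel E lab d M ((v, t) # xs) M''"

definition follow_seed_times :: "nat \<Rightarrow> nat \<Rightarrow> int set" where
  "follow_seed_times Tmax d = {i * int d | i. 0 \<le> i \<and> i \<le> \<lceil>real Tmax / real d\<rceil>}"

definition follow_run ::
  "'v set set \<Rightarrow> ('v set \<Rightarrow> nat) \<Rightarrow> nat \<Rightarrow> nat \<Rightarrow> 'v \<Rightarrow> 'v memo \<Rightarrow> bool" where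
  "follow_run E lab d Tmax v0 M \<longleftrightarrow>
     (\<exists>Ls M1 xs.
        (\<forall>t\<in>follow_seed_times Tmax d. round_log E lab d v0 t (Ls t)) \<and>
        M1 = (\<lambda>(w, t). if w = v0 \<and> t \<in> follow_seed_times Tmax d then Some (Ls t) else None) \<and>
        distinct xs \<and>
        set xs = {(u, t''). \<exists>t\<in>follow_seed_times Tmax d. (v0, u, t'') \<in> Ls t} \<and>
        explore_all_rel E lab d M1 xs M)"

definition discovered :: "'v memo \<Rightarrow> 'v set set" where
  "discovered M = {{v, u} | v u t. \<exists>s L. M s = Some L \<and> (v, u, t) \<in> L}"

definition delta_adj :: "'v set set \<Rightarrow> ('v set \<Rightarrow> nat) \<Rightarrow> nat \<Rightarrow> 'v set rel" where
  "delta_adj E lab d = {(e, f). e \<in> E \<and> f \<in> E \<and> e \<inter> f \<noteq> {} \<and>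
                               \<bar>int (lab e) - int (lab f)\<bar> \<le> int d}"

definition delta_equiv :: "'v set set \<Rightarrow> ('v set \<Rightarrow> nat) \<Rightarrow> nat \<Rightarrow> 'v set rel" where
  "delta_equiv E lab d = Id_on E \<union> (delta_adj E lab d)\<^sup>+"

definition delta_components :: "'v set set \<Rightarrow> ('v set \<Rightarrow> nat) \<Rightarrow> nat \<Rightarrow> 'v set set set" where
  "delta_components E lab d = E // delta_equiv E lab d"

end

theory Submission
  imports Defs
begin

text \<open>Call a node u explored at time t once the rounds seeded at (u, t - \<delta> - 1), (u, t - 1)
and (u, t) have been performed, and an edge explored once both endpoints are explored at its
label. Every run of Follow ends in a memo in which each node infected by a seed has been
explored at its infection time. Hence, if u is explored at t, so is every edge uc with label
within \<delta> of t: the round (u, t) resp. (u, t - \<delta> - 1) observes u infecting the neighbour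
along the first edge after t resp. after t - \<delta> - 1, and induction on the remaining time gap
reaches uc. Explored edges therefore propagate along \<delta>-adjacency, so a \<delta>-edge connected
component containing one explored edge is explored entirely; an observed infection explores
its edge, and an explored edge uv is discovered by the round (u, lab uv - 1).\<close>

definition explored :: "'v memo \<Rightarrow> nat \<Rightarrow> 'v \<Rightarrow> int \<Rightarrow> bool" where
  "explored M d u t \<longleftrightarrow> (u, t - int d - 1) \<in> dom M \<and> (u, t - 1) \<in> dom M \<and> (u, t) \<in> dom M"

lemma explored_mono: "M \<subseteq>\<^sub>m M' \<Longrightarrow> explored M d u t \<Longrightarrow> explored M' d u t"
  unfolding explored_def using map_le_implies_dom_le by blast

definition settled :: "'v set set \<Rightarrow> ('v set \<Rightarrow> nat) \<Rightarrow> nat \<Rightarrow> 'v memo \<Rightarrow> 'v memo \<Rightarrow> bool" where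
  "settled E lab d M M' \<longleftrightarrow> (\<forall>w s L. M (w, s) = None \<longrightarrow> M' (w, s) = Some L \<longrightarrow>
     round_log E lab d w s L \<and> (\<forall>b t. (w, b, t) \<in> L \<longrightarrow> explored M' d b t))"

lemma settled_extend:
  assumes "M' \<subseteq>\<^sub>m M''" and "settled E lab d M' M''"
    and "\<And>w s L. M (w, s) = None \<Longrightarrow> M' (w, s) = Some L \<Longrightarrow>
           round_log E lab d w s L \<and> (\<forall>b t. (w, b, t) \<in> L \<longrightarrow> explored M'' d b t)"
  shows "settled E lab d M M''"
  unfolding settled_def
proof (intro allI impI)
  fix w s L
  assume "M (w, s) = None" and L: "M'' (w, s) = Some L"
  show "round_log E lab d w s L \<and> (\<forall>b t. (w, b, t) \<in> L \<longrightarrow> explored M'' d b t)"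
  proof (cases "M' (w, s)")
    case None
    then show ?thesis using assms(2) L unfolding settled_def by blast
  next
    case (Some L')
    with assms(1) L have "L' = L" by (metis domI map_le_def option.inject)
    with Some assms(3) \<open>M (w, s) = None\<close> show ?thesis by blast
  qed
qed

lemma settled_trans:
  "M' \<subseteq>\<^sub>m M'' \<Longrightarrow> settled E lab d M M' \<Longrightarrow> settled E lab d M' M'' \<Longrightarrow> settled E lab d M M''"
  by (rule settled_extend) (auto simp: settled_def intro: explored_mono)

lemma rounds_rel_map_le: "rounds_rel E lab d M u ts M' \<Longrightarrow> M \<subseteq>\<^sub>m M'"
proof (induction rule: rounds_rel.induct)
  case (rounds_new u t' M L ts M')
  then have "M \<subseteq>\<^sub>m M((u, t') \<mapsto> L)" by (auto simp: map_le_def)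
  then show ?case using rounds_new.IH by (rule map_le_trans)
qed (auto simp: map_le_refl)

lemma rounds_rel_performed: "rounds_rel E lab d M u ts M' \<Longrightarrow> t \<in> set ts \<Longrightarrow> (u, t) \<in> dom M'"
proof (induction rule: rounds_rel.induct)
  case (rounds_done u t' M ts M')
  have "dom M \<subseteq> dom M'" using rounds_rel_map_le[OF rounds_done.hyps(2)] by (rule map_le_implies_dom_le)
  then show ?case using rounds_done by auto
next
  case (rounds_new u t' M L ts M')
  have "dom (M((u, t') \<mapsto> L)) \<subseteq> dom M'"
    using rounds_rel_map_le[OF rounds_new.hyps(3)] by (rule map_le_implies_dom_le)
  then show ?case using rounds_new by auto
qed simp

lemma rounds_rel_new:
  "rounds_rel E lab d M u ts M' \<Longrightarrow> M (w, s) = None \<Longrightarrow> M' (w, s) = Some L \<Longrightarrow>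
     w = u \<and> s \<in> set ts \<and> round_log E lab d u s L"
proof (induction rule: rounds_rel.induct)
  case (rounds_new u t' M L' ts M')
  show ?case
  proof (cases "(w, s) = (u, t')")
    case True
    have "M' (u, t') = Some L'"
      using rounds_rel_map_le[OF rounds_new.hyps(3)] unfolding map_le_def by force
    moreover have "w = u" "s = t'" using True by simp_all
    ultimately have "L = L'" using rounds_new.prems(2) by simp
    then show ?thesis using \<open>w = u\<close> \<open>s = t'\<close> rounds_new.hyps(2) by simp
  next
    case False
    then have "(M((u, t') \<mapsto> L')) (w, s) = None" using rounds_new.prems(1) by simp
    then have "w = u \<and> s \<in> set ts \<and> round_log E lab d u s L"
      using rounds_new.IH rounds_new.prems(2) by blast
    then show ?thesis by simp
  qed
qed simp_all

lemma explore_rel_settled: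
  "explore_rel E lab d M u t M' \<Longrightarrow> M \<subseteq>\<^sub>m M' \<and> explored M' d u t \<and> settled E lab d M M'"
  "explore_all_rel E lab d M xs M' \<Longrightarrow>
     M \<subseteq>\<^sub>m M' \<and> (\<forall>(v, t) \<in> set xs. explored M' d v t) \<and> settled E lab d M M'"
proof (induction rule: explore_rel_explore_all_rel.inducts)
  case (explore E lab d M u t M' xs M'')
  have M': "M \<subseteq>\<^sub>m M'" using explore.hyps(1) by (rule rounds_rel_map_le)
  have "dom M' \<subseteq> dom M''" using conjunct1[OF explore.IH] by (rule map_le_implies_dom_le)
  moreover have "\<forall>t'\<in>set [t - int d - 1, t - 1, t]. (u, t') \<in> dom M'"
    using rounds_rel_performed[OF explore.hyps(1)] by blast
  ultimately have "explored M'' d u t" unfolding explored_def by auto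
  moreover have "settled E lab d M M''"
  proof (rule settled_extend)
    fix w s L
    assume new: "M (w, s) = None" "M' (w, s) = Some L"
    then have "w = u" "s \<in> {t - int d - 1, t - 1, t}" "round_log E lab d u s L"
      using rounds_rel_new[OF explore.hyps(1)] by auto
    moreover have "explored M'' d b t''" if "(u, b, t'') \<in> L" for b t''
    proof -
      have "(b, t'') \<in> set xs" using explore.hyps(3) new that \<open>w = u\<close> \<open>s \<in> _\<close> by auto
      then show ?thesis using explore.IH by auto
    qed
    ultimately show "round_log E lab d w s L \<and> (\<forall>b t. (w, b, t) \<in> L \<longrightarrow> explored M'' d b t)"
      by blast
  qed (use explore.IH in blast)+
  ultimately show ?case using M' explore.IH map_le_trans by blast
next
  case (explore_all_cons E lab d M v t M' xs M'')
  have "M' \<subseteq>\<^sub>m M''" and "settled E lab d M' M''" and "\<forall>(v, t) \<in> set xs. explored M'' d v t"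
    using explore_all_cons.IH(2) by blast+
  moreover have "M \<subseteq>\<^sub>m M'" and "explored M' d v t" and "settled E lab d M M'"
    using explore_all_cons.IH(1) by blast+
  ultimately show ?case using settled_trans explored_mono map_le_trans by auto
qed (auto simp: map_le_refl settled_def)

lemma follow_run_settled:
  assumes "follow_run E lab d Tmax v0 M"
  shows "settled E lab d Map.empty M"
proof -
  obtain Ls M1 xs where
    logs: "\<forall>t\<in>follow_seed_times Tmax d. round_log E lab d v0 t (Ls t)" and
    M1: "M1 = (\<lambda>(w, t). if w = v0 \<and> t \<in> follow_seed_times Tmax d then Some (Ls t) else None)" and
    xs: "set xs = {(u, t''). \<exists>t\<in>follow_seed_times Tmax d. (v0, u, t'') \<in> Ls t}" and
    run: "explore_all_rel E lab d M1 xs M"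
    using assms unfolding follow_run_def by blast
  note run_settled = explore_rel_settled(2)[OF run]
  show ?thesis
  proof (rule settled_extend[of M1])
    show "M1 \<subseteq>\<^sub>m M" "settled E lab d M1 M" using run_settled by blast+
  next
    fix w s L
    assume "M1 (w, s) = Some L"
    then have "w = v0" "s \<in> follow_seed_times Tmax d" "L = Ls s"
      unfolding M1 by (simp_all split: if_splits)
    moreover have "explored M d b t" if "(v0, b, t) \<in> Ls s" for b t
    proof -
      have "(b, t) \<in> set xs" using xs that \<open>s \<in> _\<close> by blast
      then show ?thesis using run_settled by blast
    qed
    ultimately show "round_log E lab d w s L \<and> (\<forall>b t. (w, b, t) \<in> L \<longrightarrow> explored M d b t)"
      using logs by blast
  qed
qed

lemma infection_time_nonneg:
  "infection_times E lab d s t0 I \<Longrightarrow> x \<noteq> s \<Longrightarrow> I x = Some tx \<Longrightarrow> 0 \<le> tx"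
  unfolding infection_times_def can_infect_def by auto

lemma infection_times_after_first_contact:
  assumes I: "infection_times E lab d u s I"
    and quiet: "\<forall>x. {u, x} \<in> E \<longrightarrow> \<not> (s < int (lab {u, x}) \<and> int (lab {u, x}) < T)"
  shows "x \<noteq> u \<Longrightarrow> I x = Some tx \<Longrightarrow> T \<le> tx"
proof (induction "nat tx" arbitrary: x tx rule: less_induct)
  case less
  then obtain v tv where v: "I v = Some tv" "tv < tx" "tx \<le> tv + int d" "{x, v} \<in> E"
      "int (lab {x, v}) = tx"
    using I unfolding infection_times_def can_infect_def by blast
  show ?case
  proof (cases "v = u")
    case True
    then have "tv = s" using v(1) I unfolding infection_times_def by simp
    then show ?thesis using quiet v True by (auto simp: insert_commute)
  next
    case False
    have "0 \<le> tv" using infection_time_nonneg[OF I False v(1)] .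
    then have "T \<le> tv" using less.hyps[of tv v] False v by auto
    then show ?thesis using v by linarith
  qed
qed

lemma round_log_first_contact:
  assumes L: "round_log E lab d u s L" and c: "{u, c} \<in> E" "u \<noteq> c"
    and window: "s < int (lab {u, c})" "int (lab {u, c}) \<le> s + int d"
    and quiet: "\<forall>x. {u, x} \<in> E \<longrightarrow> \<not> (s < int (lab {u, x}) \<and> int (lab {u, x}) < int (lab {u, c}))"
      (* otherwise a neighbour of u infected earlier might be the recorded infector of c *)
  shows "(u, c, int (lab {u, c})) \<in> L"
proof -
  obtain I par where I: "infection_times E lab d u s I"
    and par: "\<forall>x t. x \<noteq> u \<longrightarrow> I x = Some t \<longrightarrow> can_infect E lab d I (par x) x t"
    and L_eq: "L = {(par x, x, t) | x t. x \<noteq> u \<and> I x = Some t}"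
    using L unfolding round_log_def by blast
  define T where "T = int (lab {u, c})"
  note late = infection_times_after_first_contact[OF I quiet[folded T_def]]
  have Iu: "I u = Some s" using I unfolding infection_times_def by blast
  have "can_infect E lab d I u c T"
    using Iu window c unfolding can_infect_def T_def by (auto simp: insert_commute)
  moreover have "\<not> can_infect E lab d I v c t'" if "t' < T" for v t'
  proof
    assume "can_infect E lab d I v c t'"
    then obtain tv where v: "I v = Some tv" "tv < t'" "int (lab {c, v}) = t'"
      unfolding can_infect_def by blast
    show False
    proof (cases "v = u")
      case True
      then show ?thesis using v that unfolding T_def by (simp add: insert_commute)
    next
      case False
      then show ?thesis using late[OF False v(1)] v that by linarith
    qed
  qed
  moreover have "I c = Some T \<longleftrightarrow>
      (\<exists>v. can_infect E lab d I v c T) \<and> (\<forall>t'<T. \<not> (\<exists>v. can_infect E lab d I v c t'))"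
    using I c(2) unfolding infection_times_def by (metis (no_types))
  ultimately have Ic: "I c = Some T" by blast
  with par c(2) have "can_infect E lab d I (par c) c T" by auto
  then obtain tp where "I (par c) = Some tp" "tp < T" unfolding can_infect_def by blast
  then have "par c = u" using late by force
  then show ?thesis using L_eq Ic c(2) unfolding T_def by force
qed

lemma round_log_entry_edge:
  "round_log E lab d w s L \<Longrightarrow> (a, b, t) \<in> L \<Longrightarrow> {a, b} \<in> E \<and> int (lab {a, b}) = t"
  unfolding round_log_def can_infect_def by (auto simp: insert_commute)

lemma sym_delta_adj: "sym (delta_adj E lab d)"
  unfolding sym_def delta_adj_def by (auto simp: abs_minus_commute)

lemma equiv_delta_equiv: "equiv E (delta_equiv E lab d)"
proof (rule equivI)
  have "delta_adj E lab d \<subseteq> E \<times> E" unfolding delta_adj_def by blast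
  then show "delta_equiv E lab d \<subseteq> E \<times> E"
    unfolding delta_equiv_def using trancl_subset_Sigma by blast
  show "refl_on E (delta_equiv E lab d)" unfolding delta_equiv_def refl_on_def by blast
  show "sym (delta_equiv E lab d)"
    unfolding delta_equiv_def by (intro sym_Un sym_Id_on sym_trancl sym_delta_adj)
  show "trans (delta_equiv E lab d)"
    unfolding delta_equiv_def trans_def by (auto intro: trancl_trans)
qed

locale settled_memo =
  fixes E :: "'v set set" and lab :: "'v set \<Rightarrow> nat" and d :: nat and M :: "'v memo"
  assumes edge_two: "e \<in> E \<Longrightarrow> \<exists>a b. a \<noteq> b \<and> e = {a, b}"
    and d_pos: "d > 0"
    and settled: "settled E lab d Map.empty M"
begin

lemma round_valid: "M (w, s) = Some L \<Longrightarrow> round_log E lab d w s L"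
  using settled unfolding settled_def by simp

lemma seed_infection_explored: "M (w, s) = Some L \<Longrightarrow> (w, b, t) \<in> L \<Longrightarrow> explored M d b t"
  using settled unfolding settled_def by simp

lemma edge_neq: "{u, c} \<in> E \<Longrightarrow> u \<noteq> c"
  using edge_two by fastforce

definition explored_edge :: "'v set \<Rightarrow> bool" where
  "explored_edge f \<longleftrightarrow> f \<in> E \<and> (\<forall>x\<in>f. explored M d x (int (lab f)))"

lemma explored_edge_first_contact:
  assumes round: "M (u, s) = Some L" and c: "{u, c} \<in> E"
    and window: "s < int (lab {u, c})" "int (lab {u, c}) \<le> s + int d"
    and quiet: "\<forall>x. {u, x} \<in> E \<longrightarrow> \<not> (s < int (lab {u, x}) \<and> int (lab {u, x}) < int (lab {u, c}))"
  shows "explored_edge {u, c}"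
proof -
  have uc: "u \<noteq> c" using edge_neq[OF c] .
  have "(u, c, int (lab {u, c})) \<in> L"
    using round_log_first_contact[OF round_valid[OF round] c uc window quiet] .
  then have "explored M d c (int (lab {u, c}))" using seed_infection_explored round by blast
  then obtain L' where round': "M (c, int (lab {c, u}) - 1) = Some L'"
    unfolding explored_def by (auto simp: insert_commute)
  have "(c, u, int (lab {c, u})) \<in> L'"
    by (rule round_log_first_contact[OF round_valid[OF round']])
       (use c uc d_pos in \<open>auto simp: insert_commute\<close>)
  then have "explored M d u (int (lab {c, u}))" using seed_infection_explored round' by blast
  then show ?thesis
    using c \<open>explored M d c _\<close> unfolding explored_edge_def by (auto simp: insert_commute)
qed

lemma explored_edge_forward:
  assumes "explored M d u t" "{u, c} \<in> E" "t \<le> int (lab {u, c})" "int (lab {u, c}) \<le> t + int d"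
  shows "explored_edge {u, c}"
  using assms
proof (induction "nat (int (lab {u, c}) - t)" arbitrary: t c rule: less_induct)
  case less
  define T where "T = int (lab {u, c})"
  consider (now) "T = t"
    | (between) x where "{u, x} \<in> E" "t < int (lab {u, x})" "int (lab {u, x}) < T"
    | (first) "t < T" "\<forall>x. {u, x} \<in> E \<longrightarrow> \<not> (t < int (lab {u, x}) \<and> int (lab {u, x}) < T)"
    using less.prems(3) unfolding T_def by fastforce
  then show ?case
  proof cases
    case now
    obtain L where "M (u, t - 1) = Some L" using less.prems(1) unfolding explored_def by auto
    then show ?thesis
      by (rule explored_edge_first_contact) (use now less.prems d_pos in \<open>auto simp: T_def\<close>)
  next
    case between
    have "explored_edge {u, x}"
      using between less.prems by (intro less.hyps) (auto simp: T_def)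
    then have "explored M d u (int (lab {u, x}))" unfolding explored_edge_def by blast
    then show ?thesis
      using between less.prems by (intro less.hyps[where t = "int (lab {u, x})"]) (auto simp: T_def)
  next
    case first
    obtain L where "M (u, t) = Some L" using less.prems(1) unfolding explored_def by auto
    then show ?thesis
      by (rule explored_edge_first_contact) (use first less.prems in \<open>auto simp: T_def\<close>)
  qed
qed

lemma explored_edge_backward:
  assumes "explored M d u t" "{u, c} \<in> E" "t - int d \<le> int (lab {u, c})" "int (lab {u, c}) < t"
  shows "explored_edge {u, c}"
  using assms
proof (induction "nat (int (lab {u, c}) - (t - int d))" arbitrary: c rule: less_induct)
  case less
  define T where "T = int (lab {u, c})"
  show ?case
  proof (cases "\<exists>x. {u, x} \<in> E \<and> t - int d \<le> int (lab {u, x}) \<and> int (lab {u, x}) < T")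
    case True
    then obtain x where x: "{u, x} \<in> E" "t - int d \<le> int (lab {u, x})" "int (lab {u, x}) < T"
      by blast
    have "explored_edge {u, x}"
      using x less.prems by (intro less.hyps) (auto simp: T_def)
    then have "explored M d u (int (lab {u, x}))" unfolding explored_edge_def by blast
    then show ?thesis
      by (rule explored_edge_forward) (use x less.prems in \<open>auto simp: T_def\<close>)
  next
    case False
    obtain L where "M (u, t - int d - 1) = Some L" using less.prems(1) unfolding explored_def by auto
    then show ?thesis
      by (rule explored_edge_first_contact) (use False less.prems in \<open>auto simp: T_def\<close>)
  qed
qed

lemma explored_edge_near:
  assumes "explored M d u t" "{u, c} \<in> E" "\<bar>int (lab {u, c}) - t\<bar> \<le> int d"
  shows "explored_edge {u, c}"
proof (cases "t \<le> int (lab {u, c})")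
  case True
  then show ?thesis using explored_edge_forward assms by auto
next
  case False
  then show ?thesis using explored_edge_backward assms by auto
qed

lemma logged_infection_explored:
  assumes round: "M (w, s) = Some L" and "(a, b, t) \<in> L"
  shows "explored M d b t"
proof -
  obtain I par where I: "infection_times E lab d w s I"
    and par: "\<forall>x t. x \<noteq> w \<longrightarrow> I x = Some t \<longrightarrow> can_infect E lab d I (par x) x t"
    and L_eq: "L = {(par x, x, t) | x t. x \<noteq> w \<and> I x = Some t}"
    using round_valid[OF round] unfolding round_log_def by blast
  show ?thesis
    using \<open>(a, b, t) \<in> L\<close>
  proof (induction "nat t" arbitrary: a b t rule: less_induct)
    case less
    then have b: "a = par b" "b \<noteq> w" "I b = Some t" using L_eq by auto
    show ?case
    proof (cases "a = w")
      case True
      then show ?thesis using seed_infection_explored round less.prems by blast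
    next
      case False
      from par b obtain ta where ta: "I a = Some ta" "ta < t" "t \<le> ta + int d" "{b, a} \<in> E"
          "int (lab {b, a}) = t"
        unfolding can_infect_def by blast
      have "(par a, a, ta) \<in> L" using L_eq False ta(1) by auto
      moreover have "0 \<le> ta" using infection_time_nonneg[OF I False ta(1)] .
      ultimately have "explored M d a ta" using less.hyps ta(2) by auto
      then have "explored_edge {a, b}"
        using ta by (intro explored_edge_near) (auto simp: insert_commute)
      then show ?thesis using ta unfolding explored_edge_def by (auto simp: insert_commute)
    qed
  qed
qed

lemma discovered_imp_explored_edge:
  assumes "e \<in> discovered M"
  shows "explored_edge e"
proof -
  obtain a b t w s L where e: "e = {a, b}" and round: "M (w, s) = Some L" and "(a, b, t) \<in> L"
    using assms unfolding discovered_def by auto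
  then have edge: "{b, a} \<in> E" "int (lab {b, a}) = t"
    using round_log_entry_edge[OF round_valid[OF round]] by (auto simp: insert_commute)
  have "explored M d b t" using logged_infection_explored round \<open>(a, b, t) \<in> L\<close> .
  then have "explored_edge {b, a}" using edge by (intro explored_edge_near) auto
  then show ?thesis using e by (simp add: insert_commute)
qed

lemma explored_edge_discovered:
  assumes "explored_edge f"
  shows "f \<in> discovered M"
proof -
  obtain a b where ab: "a \<noteq> b" "f = {a, b}" and "{a, b} \<in> E"
    using assms edge_two unfolding explored_edge_def by blast
  moreover obtain L where round: "M (a, int (lab {a, b}) - 1) = Some L"
    using assms ab unfolding explored_edge_def explored_def by auto
  ultimately have "(a, b, int (lab {a, b})) \<in> L"
    using d_pos by (intro round_log_first_contact[OF round_valid[OF round]]) auto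
  then show ?thesis using round ab unfolding discovered_def by blast
qed

lemma explored_edge_delta_adj:
  assumes "explored_edge g" "(g, h) \<in> delta_adj E lab d"
  shows "explored_edge h"
proof -
  have h: "h \<in> E" "g \<inter> h \<noteq> {}" "\<bar>int (lab h) - int (lab g)\<bar> \<le> int d"
    using assms(2) unfolding delta_adj_def by (auto simp: abs_minus_commute)
  then obtain u c where "u \<in> g" "h = {u, c}"
    using edge_two by blast
  moreover from this have "explored M d u (int (lab g))"
    using assms(1) unfolding explored_edge_def by blast
  ultimately show ?thesis using h explored_edge_near by auto
qed

lemma explored_edge_delta_equiv:
  assumes "(g, h) \<in> delta_equiv E lab d" "explored_edge g"
  shows "explored_edge h"
proof (cases "g = h")
  case False
  then have "(g, h) \<in> (delta_adj E lab d)\<^sup>+" using assms(1) unfolding delta_equiv_def by auto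
  then show ?thesis
    using assms(2) by (induction rule: trancl_induct) (auto intro: explored_edge_delta_adj)
qed (use assms in simp)

lemma delta_component_discovered:
  assumes "C \<in> delta_components E lab d" "e \<in> C" "e \<in> discovered M"
  shows "C \<subseteq> discovered M"
proof
  fix f
  assume "f \<in> C"
  then have "(e, f) \<in> delta_equiv E lab d"
    using assms(1,2) equiv_delta_equiv in_quotient_imp_in_rel
    unfolding delta_components_def by fastforce
  then have "explored_edge f"
    using discovered_imp_explored_edge[OF assms(3)] by (rule explored_edge_delta_equiv)
  then show "f \<in> discovered M" by (rule explored_edge_discovered)
qed

end

theorem mainTheorem9:
  fixes V :: "'v set" and E :: "'v set set" and lab :: "'v set \<Rightarrow> nat"
    and Tmax d :: nat and v0 :: 'v and M :: "'v memo" and C :: "'v set set" and e :: "'v set"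
  assumes "temporal_graph V E lab Tmax"
    and "d > 0"
    and "v0 \<in> V"
    and "follow_run E lab d Tmax v0 M"
    and "C \<in> delta_components E lab d"
    and "e \<in> C"
    and "e \<in> discovered M"
  shows "C \<subseteq> discovered M"
proof -
  interpret settled_memo E lab d M
  proof
    show "\<exists>a b. a \<noteq> b \<and> e = {a, b}" if "e \<in> E" for e
      using assms(1) that unfolding temporal_graph_def by blast
    show "d > 0" by (rule assms(2))
    show "settled E lab d Map.empty M" using assms(4) by (rule follow_run_settled)
  qed
  show ?thesis using assms(5-7) by (rule delta_component_discovered)
qed

end
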